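(* Let $G$ be a finite simple connected graph other than $K_2$ and let $U$ be a subset of the leaves of $G$. Then $\rho\circ\lambda_U(G)$ and $G$ have the same reduction.
   Context: A leaf is a vertex of degree one; two distinct vertices are siblings if they have the same closed neighborhood $N[v]=\{v\}\cup N(v)$. For a graph $G\neq K_2$ and a set $S$ of its leaves, $\lambda_S(G)$ removes the vertices of $S$; $\lambda(G)$ removes all leaves. $\rho(G)$ contracts each maximal group of siblings to a single vertex. The reduction of a connected graph $G\neq K_2$ is $(\rho\circ\lambda)^n(G)$ for $n$ large enough that this graph has neither leaves nor siblings (equivalently, obtained by repeatedly removing all leaves and contracting groups of siblings). Graphs are compared up to isomorphism. *)

theory Defs
  imports Main
begin

text \<open>Finite simple graphs: a vertex set and a symmetric irreflexive adjacency
relation on it (stored as ordered pairs, both orientations present).\<close>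

record 'a sgraph =
  verts :: "'a set"
  adj   :: "('a \<times> 'a) set"

definition simple_graph :: "'a sgraph \<Rightarrow> bool" where
  "simple_graph G \<longleftrightarrow> finite (verts G) \<and> adj G \<subseteq> verts G \<times> verts G
     \<and> sym (adj G) \<and> irrefl (adj G)"

definition connected_graph :: "'a sgraph \<Rightarrow> bool" where
  "connected_graph G \<longleftrightarrow> verts G \<noteq> {} \<and>
     (\<forall>u\<in>verts G. \<forall>v\<in>verts G. (u, v) \<in> (adj G)\<^sup>*)"

definition is_K2 :: "'a sgraph \<Rightarrow> bool" where
  "is_K2 G \<longleftrightarrow> (\<exists>u v. u \<noteq> v \<and> verts G = {u, v} \<and> (u, v) \<in> adj G)"

definition nbhd :: "'a sgraph \<Rightarrow> 'a \<Rightarrow> 'a set" where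
  "nbhd G v = {u. (v, u) \<in> adj G}"

definition closed_nbhd :: "'a sgraph \<Rightarrow> 'a \<Rightarrow> 'a set" where
  "closed_nbhd G v = insert v (nbhd G v)"

definition leaf :: "'a sgraph \<Rightarrow> 'a \<Rightarrow> bool" where
  "leaf G v \<longleftrightarrow> v \<in> verts G \<and> card (nbhd G v) = 1"

definition leaves :: "'a sgraph \<Rightarrow> 'a set" where
  "leaves G = {v. leaf G v}"

definition siblings :: "'a sgraph \<Rightarrow> 'a \<Rightarrow> 'a \<Rightarrow> bool" where
  "siblings G u v \<longleftrightarrow> u \<in> verts G \<and> v \<in> verts G \<and> u \<noteq> v
     \<and> closed_nbhd G u = closed_nbhd G v"

definition delete_vertices :: "'a set \<Rightarrow> 'a sgraph \<Rightarrow> 'a sgraph" where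
  "delete_vertices S G =
     \<lparr> verts = verts G - S, adj = adj G \<inter> ((verts G - S) \<times> (verts G - S)) \<rparr>"

definition lambda_S :: "'a set \<Rightarrow> 'a sgraph \<Rightarrow> 'a sgraph" where
  "lambda_S S G = delete_vertices S G"

definition lambda :: "'a sgraph \<Rightarrow> 'a sgraph" where
  "lambda G = delete_vertices (leaves G) G"

text \<open>\<rho>: contract every maximal group of siblings to a single vertex.  Since
siblings have identical closed neighbourhoods, this is realised (up to
isomorphism) by keeping one chosen representative of each group, namely of
each class of the equivalence "same closed neighbourhood", and taking the
induced subgraph on the representatives.\<close>
definition sib_rep :: "'a sgraph \<Rightarrow> 'a \<Rightarrow> 'a" where
  "sib_rep G v = (SOME u. u \<in> {w \<in> verts G. closed_nbhd G w = closed_nbhd G v})"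

definition rho :: "'a sgraph \<Rightarrow> 'a sgraph" where
  "rho G = \<lparr> verts = sib_rep G ` verts G,
             adj = adj G \<inter> (sib_rep G ` verts G \<times> sib_rep G ` verts G) \<rparr>"

definition no_leaves_no_siblings :: "'a sgraph \<Rightarrow> bool" where
  "no_leaves_no_siblings G \<longleftrightarrow> (\<forall>v. \<not> leaf G v) \<and> (\<forall>u v. \<not> siblings G u v)"

definition reduction :: "'a sgraph \<Rightarrow> 'a sgraph" where
  "reduction G = ((rho \<circ> lambda) ^^
     (LEAST n. no_leaves_no_siblings (((rho \<circ> lambda) ^^ n) G))) G"

definition graph_iso :: "'a sgraph \<Rightarrow> 'b sgraph \<Rightarrow> bool" where
  "graph_iso G H \<longleftrightarrow> (\<exists>f. bij_betw f (verts G) (verts H) \<and>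
     (\<forall>u\<in>verts G. \<forall>v\<in>verts G. (u, v) \<in> adj G \<longleftrightarrow> (f u, f v) \<in> adj H))"

end

theory Submission
  imports Defs
begin

text \<open>Call a vertex removable if it is a leaf or has a sibling, and let a pruning step delete a
single removable vertex.  Pruning terminates, and it is locally confluent up to isomorphism: two
distinct removable vertices are either siblings, in which case deleting either one gives isomorphic
graphs, or each stays removable after the other is deleted.  A Newman-style induction on the
number of vertices then shows that all graphs without leaves and siblings reachable from a graph
by pruning are isomorphic.

If no two leaves are adjacent, deleting any set of leaves is a sequence of pruning steps, and so
is \<rho>, which deletes all siblings but one representative of each class.  Connected graphs
other than K2 have no adjacent leaves, and neither has any graph of the form \<rho> H.  So
both \<rho> (\<lambda>_U G) and every iterate (\<rho> \<circ> \<lambda>)^n G are reached from G by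
pruning, which makes the two reductions pruning normal forms of G.\<close>

lemma in_nbhd_iff [simp]: "u \<in> nbhd X v \<longleftrightarrow> (v, u) \<in> adj X"
  by (simp add: nbhd_def)

lemma in_closed_nbhd_iff: "u \<in> closed_nbhd X v \<longleftrightarrow> u = v \<or> (v, u) \<in> adj X"
  by (simp add: closed_nbhd_def)

lemma simple_graph_adj_sym: "simple_graph X \<Longrightarrow> (u, v) \<in> adj X \<Longrightarrow> (v, u) \<in> adj X"
  unfolding simple_graph_def sym_def by blast

lemma simple_graph_adj_commute: "simple_graph X \<Longrightarrow> (u, v) \<in> adj X \<longleftrightarrow> (v, u) \<in> adj X"
  using simple_graph_adj_sym[of X u v] simple_graph_adj_sym[of X v u] by blast

lemma simple_graph_adj_irrefl: "simple_graph X \<Longrightarrow> (u, u) \<notin> adj X"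
  unfolding simple_graph_def irrefl_def by blast

lemma simple_graph_adj_verts: "simple_graph X \<Longrightarrow> (u, v) \<in> adj X \<Longrightarrow> u \<in> verts X \<and> v \<in> verts X"
  unfolding simple_graph_def by blast

lemma nbhd_subset_verts: "simple_graph X \<Longrightarrow> nbhd X v \<subseteq> verts X"
  unfolding simple_graph_def nbhd_def by blast

lemma leafE:
  assumes "leaf X v"
  obtains w where "nbhd X v = {w}"
  using assms unfolding leaf_def by (metis card_1_singletonE)

lemma siblings_sym: "siblings X u v \<Longrightarrow> siblings X v u"
  unfolding siblings_def by auto

lemma verts_delete_vertices [simp]: "verts (delete_vertices S X) = verts X - S"
  by (simp add: delete_vertices_def)

lemma adj_delete_vertices [simp]:
  "adj (delete_vertices S X) = adj X \<inter> ((verts X - S) \<times> (verts X - S))"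
  by (simp add: delete_vertices_def)

lemma simple_graph_delete_vertices: "simple_graph X \<Longrightarrow> simple_graph (delete_vertices S X)"
  unfolding simple_graph_def sym_def irrefl_def by auto

lemma delete_vertices_empty: "simple_graph X \<Longrightarrow> delete_vertices {} X = X"
  unfolding delete_vertices_def simple_graph_def by (cases X) (auto simp: Int_absorb2)

lemma delete_vertices_delete_vertices:
  "delete_vertices T (delete_vertices S X) = delete_vertices (S \<union> T) X"
  unfolding delete_vertices_def by auto

lemma nbhd_delete_vertices:
  "simple_graph X \<Longrightarrow> v \<in> verts X - S \<Longrightarrow> nbhd (delete_vertices S X) v = nbhd X v - S"
  unfolding simple_graph_def by auto

lemma closed_nbhd_delete_vertices:
  "simple_graph X \<Longrightarrow> v \<in> verts X - S \<Longrightarrow>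
    closed_nbhd (delete_vertices S X) v = closed_nbhd X v \<inter> (verts X - S)"
  unfolding simple_graph_def closed_nbhd_def by auto

lemma graph_iso_refl: "graph_iso X X"
  unfolding graph_iso_def by (rule exI[of _ id]) auto

lemma graph_iso_sym:
  assumes "graph_iso X Y"
  shows "graph_iso Y X"
proof -
  obtain f where f: "bij_betw f (verts X) (verts Y)"
    and adj: "\<forall>u\<in>verts X. \<forall>v\<in>verts X. (u, v) \<in> adj X \<longleftrightarrow> (f u, f v) \<in> adj Y"
    using assms unfolding graph_iso_def by blast
  let ?g = "inv_into (verts X) f"
  have g: "bij_betw ?g (verts Y) (verts X)"
    using f by (rule bij_betw_inv_into)
  have "(u, v) \<in> adj Y \<longleftrightarrow> (?g u, ?g v) \<in> adj X" if "u \<in> verts Y" "v \<in> verts Y" for u v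
  proof -
    have "?g u \<in> verts X" "?g v \<in> verts X"
      using that bij_betwE[OF g] by blast+
    then have "(?g u, ?g v) \<in> adj X \<longleftrightarrow> (f (?g u), f (?g v)) \<in> adj Y"
      using adj by blast
    also have "\<dots> \<longleftrightarrow> (u, v) \<in> adj Y"
      using that bij_betw_inv_into_right[OF f] by simp
    finally show ?thesis ..
  qed
  with g show ?thesis
    unfolding graph_iso_def by blast
qed

lemma graph_iso_trans:
  assumes "graph_iso X Y" and "graph_iso Y Z"
  shows "graph_iso X Z"
proof -
  obtain f where f: "bij_betw f (verts X) (verts Y)"
    and adj_f: "\<forall>u\<in>verts X. \<forall>v\<in>verts X. (u, v) \<in> adj X \<longleftrightarrow> (f u, f v) \<in> adj Y"
    using assms(1) unfolding graph_iso_def by blast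
  obtain g where g: "bij_betw g (verts Y) (verts Z)"
    and adj_g: "\<forall>u\<in>verts Y. \<forall>v\<in>verts Y. (u, v) \<in> adj Y \<longleftrightarrow> (g u, g v) \<in> adj Z"
    using assms(2) unfolding graph_iso_def by blast
  have "(u, v) \<in> adj X \<longleftrightarrow> ((g \<circ> f) u, (g \<circ> f) v) \<in> adj Z"
    if "u \<in> verts X" "v \<in> verts X" for u v
    using that adj_f adj_g bij_betwE[OF f] by simp
  with bij_betw_trans[OF f g] show ?thesis
    unfolding graph_iso_def by blast
qed

lemma nbhd_graph_iso:
  assumes "simple_graph X" and "simple_graph Y" and f: "bij_betw f (verts X) (verts Y)"
    and adj: "\<forall>u\<in>verts X. \<forall>v\<in>verts X. (u, v) \<in> adj X \<longleftrightarrow> (f u, f v) \<in> adj Y"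
    and x: "x \<in> verts X"
  shows "nbhd Y (f x) = f ` nbhd X x"
proof (intro equalityI subsetI)
  fix w assume "w \<in> f ` nbhd X x"
  then obtain u where xu: "(x, u) \<in> adj X" and w: "w = f u"
    by auto
  then have "u \<in> verts X"
    using simple_graph_adj_verts[OF assms(1)] by blast
  with x xu adj have "(f x, f u) \<in> adj Y"
    by blast
  with w show "w \<in> nbhd Y (f x)"
    by simp
next
  fix w assume "w \<in> nbhd Y (f x)"
  then have xw: "(f x, w) \<in> adj Y"
    by simp
  then have "w \<in> verts Y"
    using simple_graph_adj_verts[OF assms(2)] by blast
  then obtain u where u: "u \<in> verts X" "w = f u"
    using f by (auto simp: bij_betw_def)
  with xw adj x have "(x, u) \<in> adj X"
    by blast
  with u show "w \<in> f ` nbhd X x"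
    by simp
qed

definition removable :: "'a sgraph \<Rightarrow> 'a \<Rightarrow> bool" where
  "removable X v \<longleftrightarrow> leaf X v \<or> (\<exists>u. siblings X v u)"

definition prune_step :: "'a sgraph \<Rightarrow> 'a sgraph \<Rightarrow> bool" where
  "prune_step X Y \<longleftrightarrow> (\<exists>v. removable X v \<and> Y = delete_vertices {v} X)"

lemma no_leaves_no_siblings_iff: "no_leaves_no_siblings X \<longleftrightarrow> (\<forall>v. \<not> removable X v)"
  unfolding no_leaves_no_siblings_def removable_def by blast

lemma removable_in_verts: "removable X v \<Longrightarrow> v \<in> verts X"
  unfolding removable_def leaf_def siblings_def by auto

lemma prune_stepI: "removable X v \<Longrightarrow> prune_step X (delete_vertices {v} X)"
  unfolding prune_step_def by blast

lemma simple_graph_prune_steps: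
  "prune_step\<^sup>*\<^sup>* X Y \<Longrightarrow> simple_graph X \<Longrightarrow> simple_graph Y"
  by (induction rule: rtranclp_induct) (auto simp: prune_step_def simple_graph_delete_vertices)

lemma card_verts_prune_step_less:
  "prune_step X Y \<Longrightarrow> simple_graph X \<Longrightarrow> card (verts Y) < card (verts X)"
  unfolding prune_step_def simple_graph_def using removable_in_verts
  by (auto intro!: card_Diff1_less)

lemma prune_steps_from_no_leaves_no_siblings:
  "prune_step\<^sup>*\<^sup>* X Y \<Longrightarrow> no_leaves_no_siblings X \<Longrightarrow> Y = X"
  by (induction rule: converse_rtranclp_induct)
    (auto simp: no_leaves_no_siblings_iff prune_step_def)

lemma removable_graph_iso:
  assumes sX: "simple_graph X" and sY: "simple_graph Y" and "graph_iso X Y"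
    and v: "removable X v"
  shows "\<exists>w. removable Y w \<and> graph_iso (delete_vertices {v} X) (delete_vertices {w} Y)"
proof -
  obtain f where f: "bij_betw f (verts X) (verts Y)"
    and adj: "\<forall>u\<in>verts X. \<forall>v\<in>verts X. (u, v) \<in> adj X \<longleftrightarrow> (f u, f v) \<in> adj Y"
    using assms unfolding graph_iso_def by blast
  have inj: "inj_on f (verts X)"
    using f by (simp add: bij_betw_def)
  note nbhd_f = nbhd_graph_iso[OF sX sY f adj]
  have closed_nbhd_f: "closed_nbhd Y (f x) = f ` closed_nbhd X x" if "x \<in> verts X" for x
    using nbhd_f[OF that] unfolding closed_nbhd_def by simp
  have vX: "v \<in> verts X"
    using v by (rule removable_in_verts)
  have "removable Y (f v)"
    using v unfolding removable_def
  proof (elim disjE exE)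
    assume "leaf X v"
    moreover have "card (nbhd Y (f v)) = card (nbhd X v)"
      using nbhd_f[OF vX] card_image inj_on_subset[OF inj nbhd_subset_verts[OF sX]] by metis
    ultimately have "leaf Y (f v)"
      using vX bij_betwE[OF f] unfolding leaf_def by auto
    then show "leaf Y (f v) \<or> (\<exists>u. siblings Y (f v) u)" ..
  next
    fix u assume "siblings X v u"
    then have "siblings Y (f v) (f u)"
      using closed_nbhd_f bij_betwE[OF f] inj unfolding siblings_def
      by (auto simp: inj_on_def)
    then show "leaf Y (f v) \<or> (\<exists>u. siblings Y (f v) u)" by blast
  qed
  moreover have "bij_betw f (verts X - {v}) (verts Y - {f v})"
    using f vX by (intro bij_betw_DiffI) (auto dest: bij_betwE)
  then have "graph_iso (delete_vertices {v} X) (delete_vertices {f v} Y)"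
    unfolding graph_iso_def using adj by (intro exI[of _ f]) (auto dest: bij_betwE)
  ultimately show ?thesis by blast
qed

lemma no_leaves_no_siblings_graph_iso:
  assumes "simple_graph X" and "simple_graph Y" and "graph_iso X Y"
    and "no_leaves_no_siblings Y"
  shows "no_leaves_no_siblings X"
  using removable_graph_iso[OF assms(1-3)] assms(4) unfolding no_leaves_no_siblings_iff by blast

lemma prune_steps_graph_iso:
  assumes "prune_step\<^sup>*\<^sup>* X N" and "simple_graph X" and "simple_graph Y" and "graph_iso X Y"
  shows "\<exists>M. prune_step\<^sup>*\<^sup>* Y M \<and> graph_iso N M"
  using assms(1)
proof (induction rule: rtranclp_induct)
  case base
  then show ?case using assms(4) by blast
next
  case (step N N')
  then obtain M where YM: "prune_step\<^sup>*\<^sup>* Y M" and NM: "graph_iso N M"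
    by blast
  obtain v where "removable N v" and N': "N' = delete_vertices {v} N"
    using step.hyps(2) unfolding prune_step_def by blast
  moreover have "simple_graph N"
    using step.hyps(1) assms(2) by (rule simple_graph_prune_steps)
  moreover have "simple_graph M"
    using YM assms(3) by (rule simple_graph_prune_steps)
  ultimately obtain w where "removable M w" and "graph_iso N' (delete_vertices {w} M)"
    using removable_graph_iso NM by metis
  with YM show ?case
    by (blast intro: rtranclp.rtrancl_into_rtrancl prune_stepI)
qed

lemma prune_normal_form_graph_iso:
  assumes "prune_step\<^sup>*\<^sup>* X N" and "no_leaves_no_siblings N"
    and X: "simple_graph X" and Y: "simple_graph Y" and "graph_iso X Y"
  shows "\<exists>M. prune_step\<^sup>*\<^sup>* Y M \<and> no_leaves_no_siblings M \<and> graph_iso N M"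
proof -
  obtain M where YM: "prune_step\<^sup>*\<^sup>* Y M" and "graph_iso N M"
    using prune_steps_graph_iso[OF assms(1) X Y assms(5)] by blast
  moreover have "no_leaves_no_siblings M"
    using simple_graph_prune_steps[OF YM Y] simple_graph_prune_steps[OF assms(1) X]
      graph_iso_sym[OF \<open>graph_iso N M\<close>] assms(2)
    by (rule no_leaves_no_siblings_graph_iso)
  ultimately show ?thesis
    by blast
qed

lemma siblings_if_removable_adj_leaf:
  assumes X: "simple_graph X" and b: "leaf X b" and ba: "(b, a) \<in> adj X"
    and a: "removable X a"
  shows "siblings X a b"
proof -
  obtain w where "nbhd X b = {w}"
    using b by (rule leafE)
  moreover have "a \<in> nbhd X b"
    using ba by simp
  ultimately have nb: "nbhd X b = {a}"
    by (metis singletonD)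
  have ab: "(a, b) \<in> adj X"
    using X ba by (rule simple_graph_adj_sym)
  have verts: "a \<in> verts X" "b \<in> verts X" "a \<noteq> b"
    using simple_graph_adj_verts[OF X ba] simple_graph_adj_irrefl[OF X] ba by auto
  from a show ?thesis
    unfolding removable_def
  proof (elim disjE exE)
    assume "leaf X a"
    then obtain w where "nbhd X a = {w}"
      by (rule leafE)
    moreover have "b \<in> nbhd X a"
      using ab by simp
    ultimately have "nbhd X a = {b}"
      by (metis singletonD)
    with nb verts show ?thesis
      unfolding siblings_def closed_nbhd_def by auto
  next
    fix s assume s: "siblings X a s"
    have "b \<in> closed_nbhd X a"
      using ab by (simp add: in_closed_nbhd_iff)
    then have "b \<in> closed_nbhd X s"
      using s unfolding siblings_def by simp
    then have "s = b \<or> s \<in> nbhd X b"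
      using X by (auto simp: in_closed_nbhd_iff intro: simple_graph_adj_sym)
    with s nb show ?thesis
      unfolding siblings_def by auto
  qed
qed

lemma removable_delete_vertex:
  assumes X: "simple_graph X" and a: "removable X a" and b: "removable X b"
    and "a \<noteq> b" and not_siblings: "\<not> siblings X a b"
  shows "removable (delete_vertices {a} X) b"
proof -
  let ?Y = "delete_vertices {a} X"
  have bV: "b \<in> verts X - {a}"
    using removable_in_verts[OF b] \<open>a \<noteq> b\<close> by blast
  from b show ?thesis
    unfolding removable_def
  proof (elim disjE exE)
    assume lb: "leaf X b"
    then obtain w where w: "nbhd X b = {w}"
      by (rule leafE)
    have "w \<noteq> a"
    proof
      assume "w = a"
      with w have "(b, a) \<in> adj X"
        by (metis in_nbhd_iff singletonI)
      with not_siblings show False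
        using siblings_if_removable_adj_leaf[OF X lb _ a] by blast
    qed
    with w have "nbhd (delete_vertices {a} X) b = {w}"
      using nbhd_delete_vertices[OF X bV] by auto
    with bV have "leaf (delete_vertices {a} X) b"
      unfolding leaf_def by simp
    then show "leaf ?Y b \<or> (\<exists>u. siblings ?Y b u)" ..
  next
    fix s assume s: "siblings X b s"
    then have "s \<noteq> a"
      using not_siblings siblings_sym[of X b s] by blast
    with s have "s \<in> verts X - {a}"
      unfolding siblings_def by blast
    with s bV have "siblings (delete_vertices {a} X) b s"
      unfolding siblings_def by (simp add: closed_nbhd_delete_vertices[OF X])
    then show "leaf ?Y b \<or> (\<exists>u. siblings ?Y b u)" by blast
  qed
qed

lemma graph_iso_delete_siblings:
  assumes X: "simple_graph X" and ab: "siblings X a b"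
  shows "graph_iso (delete_vertices {a} X) (delete_vertices {b} X)"
proof -
  define f where "f x = (if x = b then a else x)" for x
  have verts: "a \<noteq> b" "a \<in> verts X" "b \<in> verts X"
    and same_nbhd: "closed_nbhd X a = closed_nbhd X b"
    using ab unfolding siblings_def by auto
  have swap: "(b, z) \<in> adj X \<longleftrightarrow> (a, z) \<in> adj X" if "z \<noteq> a" "z \<noteq> b" for z
    using that same_nbhd unfolding set_eq_iff in_closed_nbhd_iff by metis
  have "bij_betw f (verts X - {a}) (verts X - {b})"
    unfolding bij_betw_def inj_on_def f_def using verts by auto
  moreover have "(x, y) \<in> adj X \<longleftrightarrow> (f x, f y) \<in> adj X"
    if "x \<in> verts X - {a}" and "y \<in> verts X - {a}" for x y
  proof -
    consider "x = b" "y = b" | "x = b" "y \<noteq> b" | "x \<noteq> b" "y = b" | "x \<noteq> b" "y \<noteq> b"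
      by blast
    then show ?thesis
    proof cases
      case 1
      then show ?thesis
        using simple_graph_adj_irrefl[OF X] by (simp add: f_def)
    next
      case 2
      then show ?thesis
        using that swap[of y] by (simp add: f_def)
    next
      case 3
      then show ?thesis
        using that swap[of x] simple_graph_adj_commute[OF X, of x] simple_graph_adj_commute[OF X, of _ a]
        by (simp add: f_def)
    next
      case 4
      then show ?thesis
        by (simp add: f_def)
    qed
  qed
  ultimately show ?thesis
    unfolding graph_iso_def by (intro exI[of _ f]) (auto dest: bij_betwE)
qed

lemma prune_step_local_confluence:
  assumes X: "simple_graph X" and a: "removable X a" and b: "removable X b"
  shows "graph_iso (delete_vertices {a} X) (delete_vertices {b} X) \<or>
    (\<exists>Z. prune_step (delete_vertices {a} X) Z \<and> prune_step (delete_vertices {b} X) Z)"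
proof (cases "a = b \<or> siblings X a b")
  case True
  then show ?thesis
    using graph_iso_refl graph_iso_delete_siblings[OF X] by blast
next
  case False
  then have "removable (delete_vertices {a} X) b" "removable (delete_vertices {b} X) a"
    using removable_delete_vertex[OF X] a b siblings_sym[of X b a] by blast+
  moreover have "delete_vertices {b} (delete_vertices {a} X) = delete_vertices {a} (delete_vertices {b} X)"
    by (simp add: delete_vertices_delete_vertices Un_commute)
  ultimately show ?thesis
    using prune_stepI by metis
qed

lemma prune_normal_form_exists:
  "simple_graph X \<Longrightarrow> \<exists>N. prune_step\<^sup>*\<^sup>* X N \<and> no_leaves_no_siblings N"
proof (induction "card (verts X)" arbitrary: X rule: less_induct)
  case less
  show ?case
  proof (cases "no_leaves_no_siblings X")
    case False
    then obtain v where "removable X v"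
      unfolding no_leaves_no_siblings_iff by blast
    then have step: "prune_step X (delete_vertices {v} X)"
      by (rule prune_stepI)
    then obtain N where "prune_step\<^sup>*\<^sup>* (delete_vertices {v} X) N" "no_leaves_no_siblings N"
      using less card_verts_prune_step_less simple_graph_delete_vertices by blast
    with step show ?thesis
      by (meson converse_rtranclp_into_rtranclp)
  qed blast
qed

theorem prune_normal_forms_graph_iso:
  assumes "simple_graph X"
    and "prune_step\<^sup>*\<^sup>* X N1" and "no_leaves_no_siblings N1"
    and "prune_step\<^sup>*\<^sup>* X N2" and "no_leaves_no_siblings N2"
  shows "graph_iso N1 N2"
  using assms
proof (induction "card (verts X)" arbitrary: X N1 N2 rule: less_induct)
  case less
  note X = less.prems(1)
  show ?case
  proof (cases "no_leaves_no_siblings X")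
    case True
    then show ?thesis
      using less.prems prune_steps_from_no_leaves_no_siblings graph_iso_refl by metis
  next
    case False
    then have "N1 \<noteq> X" "N2 \<noteq> X"
      using less.prems by auto
    then obtain X1 X2 where s1: "prune_step X X1" and N1: "prune_step\<^sup>*\<^sup>* X1 N1"
      and s2: "prune_step X X2" and N2: "prune_step\<^sup>*\<^sup>* X2 N2"
      using less.prems converse_rtranclpE by metis
    then obtain a b where a: "removable X a" and X1: "X1 = delete_vertices {a} X"
      and b: "removable X b" and X2: "X2 = delete_vertices {b} X"
      unfolding prune_step_def by blast
    have X12: "simple_graph X1" "simple_graph X2"
      "card (verts X1) < card (verts X)" "card (verts X2) < card (verts X)"
      using X1 X2 simple_graph_delete_vertices[OF X] card_verts_prune_step_less[OF s1 X]
        card_verts_prune_step_less[OF s2 X] by simp_all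
    note IH = less.hyps[OF X12(3) X12(1)] less.hyps[OF X12(4) X12(2)]
    from prune_step_local_confluence[OF X a b, folded X1 X2] show ?thesis
    proof (elim disjE exE conjE)
      assume "graph_iso X1 X2"
      then obtain M where "prune_step\<^sup>*\<^sup>* X1 M" "no_leaves_no_siblings M" "graph_iso N2 M"
        using prune_normal_form_graph_iso[OF N2 less.prems(5) X12(2,1)] graph_iso_sym by blast
      then show ?thesis
        using IH(1)[OF N1 less.prems(3)] graph_iso_sym graph_iso_trans by blast
    next
      fix Z assume "prune_step X1 Z" "prune_step X2 Z"
      moreover obtain M where "prune_step\<^sup>*\<^sup>* Z M" "no_leaves_no_siblings M"
        using prune_normal_form_exists simple_graph_prune_steps X12 \<open>prune_step X1 Z\<close>
        by (meson r_into_rtranclp)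
      ultimately have "graph_iso N1 M" "graph_iso M N2"
        using IH N1 N2 less.prems(3,5) converse_rtranclp_into_rtranclp by metis+
      then show ?thesis
        by (rule graph_iso_trans)
    qed
  qed
qed

lemma prune_steps_delete_vertices:
  assumes X: "simple_graph X" and "finite S"
    and removable: "\<And>T v. T \<subseteq> S \<Longrightarrow> v \<in> S - T \<Longrightarrow> removable (delete_vertices T X) v"
  shows "prune_step\<^sup>*\<^sup>* X (delete_vertices S X)"
  using \<open>finite S\<close> removable
proof (induction S rule: finite_induct)
  case empty
  then show ?case
    using delete_vertices_empty[OF X] by simp
next
  case (insert v S)
  then have steps: "prune_step\<^sup>*\<^sup>* X (delete_vertices S X)"
    by blast
  have "removable (delete_vertices S X) v"
    using insert.prems[of S v] insert.hyps(2) by blast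
  then have "prune_step (delete_vertices S X) (delete_vertices (insert v S) X)"
    using prune_stepI by (metis delete_vertices_delete_vertices insert_is_Un sup_commute)
  with steps show ?case
    by (rule rtranclp.rtrancl_into_rtrancl)
qed

definition independent_leaves :: "'a sgraph \<Rightarrow> bool" where
  "independent_leaves X \<longleftrightarrow> (\<forall>u v. leaf X u \<longrightarrow> leaf X v \<longrightarrow> (u, v) \<notin> adj X)"

lemma finite_leaves: "simple_graph X \<Longrightarrow> finite (leaves X)"
  unfolding simple_graph_def leaves_def leaf_def by (auto intro: finite_subset)

lemma prune_steps_delete_leaves:
  assumes X: "simple_graph X" and "independent_leaves X" and S: "S \<subseteq> leaves X"
  shows "prune_step\<^sup>*\<^sup>* X (delete_vertices S X)"
proof (rule prune_steps_delete_vertices[OF X])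
  show "finite S"
    using finite_subset[OF S finite_leaves[OF X]] .
next
  fix T v assume T: "T \<subseteq> S" and v: "v \<in> S - T"
  then have "leaf X v"
    using S unfolding leaves_def by blast
  then obtain w where w: "nbhd X v = {w}"
    by (rule leafE)
  have "leaf X w \<longrightarrow> (v, w) \<notin> adj X"
    using \<open>leaf X v\<close> \<open>independent_leaves X\<close> unfolding independent_leaves_def by blast
  with w S T have "w \<notin> T"
    unfolding leaves_def by (metis in_nbhd_iff mem_Collect_eq singletonI subsetD)
  moreover have vV: "v \<in> verts X - T"
    using \<open>leaf X v\<close> v unfolding leaf_def by blast
  ultimately have "nbhd (delete_vertices T X) v = {w}"
    using nbhd_delete_vertices[OF X vV] w by auto
  with vV show "removable (delete_vertices T X) v"
    unfolding removable_def leaf_def by simp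
qed

lemma sib_rep_in_verts: "x \<in> verts X \<Longrightarrow> sib_rep X x \<in> verts X"
  and closed_nbhd_sib_rep: "x \<in> verts X \<Longrightarrow> closed_nbhd X (sib_rep X x) = closed_nbhd X x"
  unfolding sib_rep_def by (metis (mono_tags, lifting) mem_Collect_eq someI)+

lemma sib_rep_cong: "closed_nbhd X x = closed_nbhd X y \<Longrightarrow> sib_rep X x = sib_rep X y"
  unfolding sib_rep_def by simp

lemma sib_rep_sib_rep: "x \<in> verts X \<Longrightarrow> sib_rep X (sib_rep X x) = sib_rep X x"
  by (rule sib_rep_cong) (rule closed_nbhd_sib_rep)

lemma rho_eq_delete_vertices: "rho X = delete_vertices (verts X - sib_rep X ` verts X) X"
proof -
  have "sib_rep X ` verts X \<subseteq> verts X"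
    by (rule image_subsetI) (rule sib_rep_in_verts)
  then have "verts X - (verts X - sib_rep X ` verts X) = sib_rep X ` verts X"
    by blast
  then show ?thesis
    unfolding rho_def delete_vertices_def by simp
qed

lemma simple_graph_rho: "simple_graph X \<Longrightarrow> simple_graph (rho X)"
  unfolding rho_eq_delete_vertices by (rule simple_graph_delete_vertices)

lemma prune_steps_rho:
  assumes X: "simple_graph X"
  shows "prune_step\<^sup>*\<^sup>* X (rho X)"
  unfolding rho_eq_delete_vertices
proof (rule prune_steps_delete_vertices[OF X])
  show "finite (verts X - sib_rep X ` verts X)"
    using X unfolding simple_graph_def by blast
next
  fix T v assume T: "T \<subseteq> verts X - sib_rep X ` verts X"
    and v: "v \<in> verts X - sib_rep X ` verts X - T"
  let ?r = "sib_rep X v"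
  have vV: "v \<in> verts X - T" and rV: "?r \<in> verts X - T" and "v \<noteq> ?r"
    using v T sib_rep_in_verts[of v X] by blast+
  then have "siblings (delete_vertices T X) v ?r"
    unfolding siblings_def
    by (simp add: closed_nbhd_delete_vertices[OF X] closed_nbhd_sib_rep)
  then show "removable (delete_vertices T X) v"
    unfolding removable_def by blast
qed

lemma closed_nbhd_subset_if_rho_leaf:
  assumes X: "simple_graph X" and p: "p \<in> sib_rep X ` verts X" and pq: "(p, q) \<in> adj X"
    and leaf_p: "nbhd (rho X) p = {q}"
  shows "closed_nbhd X p \<subseteq> closed_nbhd X q"
proof
  fix c assume c: "c \<in> closed_nbhd X p"
  show "c \<in> closed_nbhd X q"
  proof (cases "c = p \<or> c = q")
    case True
    then show ?thesis
      using pq simple_graph_adj_sym[OF X] by (auto simp: in_closed_nbhd_iff)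
  next
    case False
    with c have pc: "(p, c) \<in> adj X"
      by (simp add: in_closed_nbhd_iff)
    then have cV: "c \<in> verts X"
      using simple_graph_adj_verts[OF X] by blast
    let ?r = "sib_rep X c"
    have "p \<in> closed_nbhd X ?r"
      using pc simple_graph_adj_sym[OF X] closed_nbhd_sib_rep[OF cV]
      by (simp add: in_closed_nbhd_iff)
    then consider "?r = p" | "(p, ?r) \<in> adj X"
      using simple_graph_adj_sym[OF X] by (auto simp: in_closed_nbhd_iff)
    then show ?thesis
    proof cases
      case 1
      then have "closed_nbhd X c = closed_nbhd X p"
        using closed_nbhd_sib_rep[OF cV] by simp
      then have "q \<in> closed_nbhd X c"
        using pq by (simp add: in_closed_nbhd_iff)
      with False show ?thesis
        using simple_graph_adj_sym[OF X] by (auto simp: in_closed_nbhd_iff)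
    next
      case 2
      with p cV have "?r \<in> nbhd (rho X) p"
        unfolding rho_def by simp
      with leaf_p have "?r = q"
        by blast
      then show ?thesis
        using closed_nbhd_sib_rep[OF cV] by (simp add: in_closed_nbhd_iff)
    qed
  qed
qed

lemma independent_leaves_rho:
  assumes X: "simple_graph X"
  shows "independent_leaves (rho X)"
  unfolding independent_leaves_def
proof (intro allI impI notI)
  fix a b assume a: "leaf (rho X) a" and b: "leaf (rho X) b" and ab: "(a, b) \<in> adj (rho X)"
  let ?R = "sib_rep X ` verts X"
  have R: "a \<in> ?R" "b \<in> ?R" and abX: "(a, b) \<in> adj X"
    using ab unfolding rho_def by auto
  have ba: "(b, a) \<in> adj (rho X)"
    using simple_graph_adj_sym[OF simple_graph_rho[OF X] ab] .
  txt \<open>Every neighbour of a in X is represented in \<rho> X by a itself or by its unique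
    neighbour b there, so N[a] \<subseteq> N[b] in X; symmetrically N[b] \<subseteq> N[a], and then a and b
    would be the same representative.\<close>
  have "nbhd (rho X) a = {b}" "nbhd (rho X) b = {a}"
    using a b ab ba by (metis in_nbhd_iff leafE singletonD)+
  then have "closed_nbhd X a = closed_nbhd X b"
    using closed_nbhd_subset_if_rho_leaf[OF X] R abX simple_graph_adj_sym[OF X abX]
    by (metis subset_antisym)
  then have "sib_rep X a = sib_rep X b"
    by (rule sib_rep_cong)
  moreover have "sib_rep X r = r" if "r \<in> ?R" for r
    using that sib_rep_sib_rep by (elim imageE) simp
  ultimately have "a = b"
    using R by metis
  with abX show False
    using simple_graph_adj_irrefl[OF X] by simp
qed

lemma simple_graph_lambda: "simple_graph X \<Longrightarrow> simple_graph (lambda X)"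
  unfolding lambda_def by (rule simple_graph_delete_vertices)

lemma prune_steps_rho_lambda:
  assumes X: "simple_graph X" and "independent_leaves X"
  shows "prune_step\<^sup>*\<^sup>* X (rho (lambda X))"
proof -
  have "prune_step\<^sup>*\<^sup>* X (lambda X)"
    unfolding lambda_def using assms by (rule prune_steps_delete_leaves) simp
  moreover have "prune_step\<^sup>*\<^sup>* (lambda X) (rho (lambda X))"
    using X by (intro prune_steps_rho simple_graph_lambda)
  ultimately show ?thesis
    by (rule rtranclp_trans)
qed

lemma prune_steps_iterate_rho_lambda:
  "simple_graph X \<Longrightarrow> independent_leaves X \<Longrightarrow> prune_step\<^sup>*\<^sup>* X (((rho \<circ> lambda) ^^ k) X)"
proof (induction k arbitrary: X)
  case (Suc k)
  have "prune_step\<^sup>*\<^sup>* (rho (lambda X)) (((rho \<circ> lambda) ^^ k) (rho (lambda X)))"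
    using Suc.prems(1)
    by (intro Suc.IH simple_graph_rho independent_leaves_rho simple_graph_lambda)
  with prune_steps_rho_lambda[OF Suc.prems] show ?case
    unfolding funpow_Suc_right comp_apply by (rule rtranclp_trans)
qed simp

lemma card_verts_rho_le: "finite (verts X) \<Longrightarrow> card (verts (rho X)) \<le> card (verts X)"
  unfolding rho_def by (simp add: card_image_le)

lemma card_verts_rho_less:
  assumes "finite (verts X)" and "siblings X u v"
  shows "card (verts (rho X)) < card (verts X)"
proof -
  have "sib_rep X u = sib_rep X v"
    using assms(2) unfolding siblings_def by (intro sib_rep_cong) simp
  with assms(2) have "\<not> inj_on (sib_rep X) (verts X)"
    unfolding siblings_def inj_on_def by blast
  with assms(1) show ?thesis
    unfolding rho_def using card_image_le inj_on_iff_eq_card by (metis le_neq_implies_less select_convs(1))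
qed

lemma card_verts_rho_lambda_less:
  assumes X: "simple_graph X" and "\<not> no_leaves_no_siblings X"
  shows "card (verts (rho (lambda X))) < card (verts X)"
proof -
  have fin: "finite (verts X)"
    using X unfolding simple_graph_def by blast
  show ?thesis
  proof (cases "leaves X = {}")
    case False
    then have "verts (lambda X) \<subset> verts X"
      unfolding lambda_def leaves_def leaf_def by auto
    then have "card (verts (lambda X)) < card (verts X)"
      by (rule psubset_card_mono[OF fin])
    moreover have "card (verts (rho (lambda X))) \<le> card (verts (lambda X))"
      using fin unfolding lambda_def by (intro card_verts_rho_le) simp
    ultimately show ?thesis
      by linarith
  next
    case True
    then have "lambda X = X"
      unfolding lambda_def using delete_vertices_empty[OF X] by simp
    moreover obtain u v where "siblings X u v"
      using assms(2) True unfolding no_leaves_no_siblings_def leaves_def by blast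
    ultimately show ?thesis
      using card_verts_rho_less[OF fin] by simp
  qed
qed

lemma no_leaves_no_siblings_iterate_rho_lambda:
  "simple_graph X \<Longrightarrow> \<exists>k. no_leaves_no_siblings (((rho \<circ> lambda) ^^ k) X)"
proof (induction "card (verts X)" arbitrary: X rule: less_induct)
  case less
  show ?case
  proof (cases "no_leaves_no_siblings X")
    case True
    then show ?thesis
      by (metis funpow_0)
  next
    case False
    then obtain k where "no_leaves_no_siblings (((rho \<circ> lambda) ^^ k) (rho (lambda X)))"
      using less.hyps[OF card_verts_rho_lambda_less[OF less.prems False]]
        simple_graph_rho[OF simple_graph_lambda[OF less.prems]] by blast
    then have "no_leaves_no_siblings (((rho \<circ> lambda) ^^ Suc k) X)"
      unfolding funpow_Suc_right by simp
    then show ?thesis ..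
  qed
qed

lemma no_leaves_no_siblings_reduction:
  "simple_graph X \<Longrightarrow> no_leaves_no_siblings (reduction X)"
  unfolding reduction_def by (rule LeastI_ex) (rule no_leaves_no_siblings_iterate_rho_lambda)

lemma prune_steps_reduction:
  "simple_graph X \<Longrightarrow> independent_leaves X \<Longrightarrow> prune_step\<^sup>*\<^sup>* X (reduction X)"
  unfolding reduction_def by (rule prune_steps_iterate_rho_lambda)

lemma independent_leaves_if_connected:
  assumes X: "simple_graph X" and "connected_graph X" and "\<not> is_K2 X"
  shows "independent_leaves X"
  unfolding independent_leaves_def
proof (intro allI impI notI)
  fix u v assume "leaf X u" "leaf X v" and uv: "(u, v) \<in> adj X"
  then have nbhd: "nbhd X u = {v}" "nbhd X v = {u}"
    using simple_graph_adj_sym[OF X uv] by (metis in_nbhd_iff leafE singletonD)+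
  have "w \<in> {u, v}" if "(u, w) \<in> (adj X)\<^sup>*" for w
    using that
  proof (induction rule: rtrancl_induct)
    case (step y z)
    with nbhd show ?case
      by (metis in_nbhd_iff insert_iff singletonD)
  qed simp
  then have "verts X = {u, v}"
    using \<open>connected_graph X\<close> simple_graph_adj_verts[OF X uv]
    unfolding connected_graph_def by blast
  moreover have "u \<noteq> v"
    using uv simple_graph_adj_irrefl[OF X] by blast
  ultimately show False
    using \<open>\<not> is_K2 X\<close> uv unfolding is_K2_def by blast
qed

theorem corollary5p3:
  fixes G :: "'a sgraph" and U :: "'a set"
  assumes "simple_graph G" and "connected_graph G" and "\<not> is_K2 G"
    and "U \<subseteq> leaves G"
  shows "graph_iso (reduction (rho (lambda_S U G))) (reduction G)"
proof -
  let ?H = "rho (lambda_S U G)"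
  have G: "independent_leaves G"
    using assms(1-3) by (rule independent_leaves_if_connected)
  have simple: "simple_graph (lambda_S U G)"
    unfolding lambda_S_def using assms(1) by (rule simple_graph_delete_vertices)
  have "prune_step\<^sup>*\<^sup>* G ?H"
    using prune_steps_delete_leaves[OF assms(1) G assms(4)] prune_steps_rho[OF simple]
    unfolding lambda_S_def by (rule rtranclp_trans)
  also have "prune_step\<^sup>*\<^sup>* ?H (reduction ?H)"
    using simple_graph_rho[OF simple] independent_leaves_rho[OF simple]
    by (rule prune_steps_reduction)
  finally show ?thesis
    using no_leaves_no_siblings_reduction[OF simple_graph_rho[OF simple]]
      prune_steps_reduction[OF assms(1) G] no_leaves_no_siblings_reduction[OF assms(1)]
    by (rule prune_normal_forms_graph_iso[OF assms(1)])
qed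

end
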